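(* Let $\beta>0$, $\kappa>0$, $\gamma=\beta/(\nu+2)$, $\nu\in(-1,1)$, and fix $\eta_{0,\infty}>0$ with $\frac{\beta(\nu+1)}{2(\nu+2)}<\eta_{0,\infty}^{\nu+3}<\beta$. For $s>0$ let $\eta_\infty(s)=s^{-2/(\nu+3)}\eta_{0,\infty}$ and let $(w_s,\eta_s)$ be the soliton-like traveling wave with speed $s$ and background $\eta_\infty(s)$, normalized so that $w_s(z)=s^{\frac{\nu+1}{\nu+3}}w_0(z)$, $\eta_s(z)=s^{-\frac{2}{\nu+3}}\eta_0(z)$, where $(w_0,\eta_0)$ is the soliton-like solution of $w_0-\eta_0^{-(\nu+2)}+\eta_{0,\infty}^{-(\nu+2)}=0$, $(\gamma-\kappa\partial_z^2)w_0+\eta_0-\eta_{0,\infty}=0$ with $w_0\to0$, $\eta_0\to\eta_{0,\infty}$ at $\pm\infty$. Then the momentum $I(s)=\int_{-\infty}^{\infty}w_s(z)\,[\eta_s(z)-\eta_\infty(s)]\,dz$ satisfies $$\frac{dI}{ds}=s^{-4/(\nu+3)}\,\frac{\nu-1}{\nu+3}\int_{-\infty}^{\infty}w_0(z)[\eta_0(z)-\eta_{0,\infty}]\,dz>0.$$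
   Context: A soliton-like traveling wave with speed $s$ and background $\eta_\infty>0$ is a non-constant smooth pair $(w_s,\eta_s)$ with $\eta_s>0$ satisfying $s w_s+\eta_\infty^{-(\nu+2)}-\eta_s^{-(\nu+2)}=0$, $(\gamma-\kappa\partial_z^2)w_s+s(\eta_s-\eta_\infty)=0$, $w_s\to0$, $\eta_s\to\eta_\infty$ as $|z|\to\infty$, with $\eta_s>\eta_\infty$ (homoclinic loop to the right of the saddle $(\eta_\infty,0)$ of the phase plane $(\eta_s,\eta_s')$). *)

theory Defs
  imports "HOL-Analysis.Analysis"
begin

definition smooth_fun :: "(real \<Rightarrow> real) \<Rightarrow> bool" where
  "smooth_fun f \<longleftrightarrow> (\<forall>n z. (deriv ^^ n) f differentiable (at z))"

text \<open>Soliton-like traveling wave with speed s and background eta_inf (parameters kappa, gamma, nu):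
  non-constant smooth pair (w, eta), eta > 0, satisfying the two ODE relations, decaying to
  (0, eta_inf) at both infinities, with eta > eta_inf (homoclinic loop right of the saddle).\<close>
definition soliton_tw ::
  "real \<Rightarrow> real \<Rightarrow> real \<Rightarrow> real \<Rightarrow> real \<Rightarrow> (real \<Rightarrow> real) \<Rightarrow> (real \<Rightarrow> real) \<Rightarrow> bool" where
  "soliton_tw \<kappa> \<gamma> \<nu> s \<eta>inf w \<eta> \<longleftrightarrow>
     smooth_fun w \<and> smooth_fun \<eta> \<and>
     \<not> ((\<exists>c. \<forall>z. w z = c) \<and> (\<exists>c. \<forall>z. \<eta> z = c)) \<and>
     (\<forall>z. \<eta> z > 0) \<and>
     (\<forall>z. s * w z + \<eta>inf powr (-(\<nu>+2)) - \<eta> z powr (-(\<nu>+2)) = 0) \<and>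
     (\<forall>z. \<gamma> * w z - \<kappa> * deriv (deriv w) z + s * (\<eta> z - \<eta>inf) = 0) \<and>
     (w \<longlongrightarrow> 0) at_top \<and> (w \<longlongrightarrow> 0) at_bot \<and>
     (\<eta> \<longlongrightarrow> \<eta>inf) at_top \<and> (\<eta> \<longlongrightarrow> \<eta>inf) at_bot \<and>
     (\<forall>z. \<eta> z > \<eta>inf)"

end

theory Submission
  imports Defs
begin

text \<open>
  The scaling \<open>(w, \<eta>) \<mapsto> (s powr ((\<nu>+1)/(\<nu>+3)) * w, s powr (-2/(\<nu>+3)) * \<eta>)\<close> turns a
  unit-speed soliton into one of speed \<open>s\<close>, so \<open>I s = s powr ((\<nu>-1)/(\<nu>+3)) * I 1\<close> and the
  derivative formula is immediate. Its sign comes from \<open>I 1 < 0\<close>: the first profile equation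
  and \<open>\<eta>0 > \<eta>0inf\<close> force \<open>w0 < 0\<close>. The real work is the integrability of
  \<open>w0 * (\<eta>0 - \<eta>0inf)\<close>. Combining both profile equations with the mean value theorem gives
  \<open>(\<nu>+2) * \<kappa> * (- w0'') \<ge> (\<beta> - \<eta>0 powr (\<nu>+3)) * (- w0)\<close>, and \<open>\<eta>0inf powr (\<nu>+3) < \<beta>\<close>,
  so on both tails the integrand is dominated by a multiple of \<open>- w0''\<close>. The integral of the
  latter over a tail is bounded by the derivative of the convex, decaying function \<open>- w0\<close> at
  the start of the tail.
\<close>

lemma convex_tail_deriv_nonpos:
  fixes v v' v'' :: "real \<Rightarrow> real"
  assumes v': "\<And>z. a \<le> z \<Longrightarrow> (v has_real_derivative v' z) (at z)"
    and v'': "\<And>z. a \<le> z \<Longrightarrow> (v' has_real_derivative v'' z) (at z)"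
    and convex: "\<And>z. a \<le> z \<Longrightarrow> v'' z \<ge> 0"
    and lim: "(v \<longlongrightarrow> 0) at_top" and "a \<le> b"
  shows "v' b \<le> 0"
proof (rule ccontr)
  assume "\<not> v' b \<le> 0"
  hence pos: "v' b > 0" by simp
  have v'_mono: "v' b \<le> v' z" if "b \<le> z" for z
    by (rule DERIV_nonneg_imp_nondecreasing[OF that]) (use v'' convex \<open>a \<le> b\<close> in \<open>meson order_trans\<close>)
  have tangent_below: "(v b - v' b * b) + v' b * z \<le> v z" if "b \<le> z" for z
  proof -
    have "v b - v' b * b \<le> v z - v' b * z"
    proof (rule DERIV_nonneg_imp_nondecreasing[OF that, of "\<lambda>x. v x - v' b * x"])
      fix x assume "b \<le> x" "x \<le> z"
      thus "\<exists>y. ((\<lambda>x. v x - v' b * x) has_real_derivative y) (at x) \<and> y \<ge> 0"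
        using \<open>a \<le> b\<close> by (intro exI[of _ "v' x - v' b"]) (auto intro!: derivative_eq_intros v' v'_mono)
    qed
    thus ?thesis by simp
  qed
  have "filterlim (\<lambda>z. (v b - v' b * b) + v' b * z) at_top at_top"
    by (rule filterlim_tendsto_add_at_top[OF tendsto_const
          filterlim_tendsto_pos_mult_at_top[OF tendsto_const pos filterlim_ident]])
  hence "filterlim v at_top at_top"
    by (rule filterlim_at_top_mono) (use tangent_below in \<open>auto simp: eventually_at_top_linorder\<close>)
  thus False
    by (intro not_tendsto_and_filterlim_at_infinity[OF trivial_limit_at_top_linorder lim]
          filterlim_at_top_imp_at_infinity)
qed

lemma integral_tail_le_minus_deriv:
  fixes g v v' v'' :: "real \<Rightarrow> real"
  assumes v': "\<And>z. a \<le> z \<Longrightarrow> (v has_real_derivative v' z) (at z)"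
    and v'': "\<And>z. a \<le> z \<Longrightarrow> (v' has_real_derivative v'' z) (at z)"
    and g_nonneg: "\<And>z. a \<le> z \<Longrightarrow> 0 \<le> g z" and g_le: "\<And>z. a \<le> z \<Longrightarrow> g z \<le> v'' z"
    and g_int: "g integrable_on {a..k}" and lim: "(v \<longlongrightarrow> 0) at_top" and "a \<le> k"
  shows "integral {a..k} g \<le> - v' a"
proof -
  have "(v'' has_integral v' k - v' a) {a..k}"
    using \<open>a \<le> k\<close> v''
    by (intro fundamental_theorem_of_calculus)
       (auto simp: has_real_derivative_iff_has_vector_derivative intro: has_vector_derivative_at_within)
  hence "integral {a..k} g \<le> v' k - v' a"
    by (rule has_integral_le[OF integrable_integral[OF g_int]]) (use g_le in auto)
  moreover have "v' k \<le> 0"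
  proof (rule convex_tail_deriv_nonpos[OF v' v'' _ lim \<open>a \<le> k\<close>])
    fix z assume "a \<le> z"
    show "0 \<le> v'' z" using g_nonneg[OF \<open>a \<le> z\<close>] g_le[OF \<open>a \<le> z\<close>] by linarith
  qed
  ultimately show ?thesis by simp
qed

lemma nonneg_integrable_on_UNIV_if_bounded:
  fixes g :: "real \<Rightarrow> real"
  assumes g_int: "\<And>x y. g integrable_on {x..y}" and g_nonneg: "\<And>z. 0 \<le> g z"
    and bound: "\<And>k. integral {-k..k} g \<le> B"
  shows "g integrable_on UNIV"
proof -
  define f where "f = (\<lambda>k::nat. \<lambda>x. if x \<in> {-real k..real k} then g x else 0)"
  have "g integrable_on UNIV \<and> ((\<lambda>k. integral UNIV (f k)) \<longlongrightarrow> integral UNIV g) sequentially"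
  proof (rule monotone_convergence_increasing)
    show "f k integrable_on UNIV" for k
      unfolding f_def integrable_restrict_UNIV by (rule g_int)
    show "f k x \<le> f (Suc k) x" for k x
      unfolding f_def using g_nonneg[of x] by auto
    show "((\<lambda>k. f k x) \<longlongrightarrow> g x) sequentially" for x
    proof (rule tendsto_eventually)
      show "\<forall>\<^sub>F k in sequentially. f k x = g x"
        unfolding eventually_sequentially f_def by (intro exI[of _ "nat \<lceil>\<bar>x\<bar>\<rceil>"]) auto
    qed
    have "norm (integral {-real k..real k} g) \<le> B" for k
      using bound[of "real k"] integral_nonneg[OF g_int g_nonneg] by simp
    thus "bounded (range (\<lambda>k. integral UNIV (f k)))"
      unfolding bounded_iff f_def integral_restrict_UNIV by blast
  qed
  thus ?thesis by blast
qed

lemma integrable_on_UNIV_if_tails_below_convex: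
  fixes g v v' v'' :: "real \<Rightarrow> real"
  assumes g_cont: "continuous_on UNIV g" and g_nonneg: "\<And>z. 0 \<le> g z"
    and v': "\<And>z. (v has_real_derivative v' z) (at z)"
    and v'': "\<And>z. (v' has_real_derivative v'' z) (at z)"
    and lim_top: "(v \<longlongrightarrow> 0) at_top" and lim_bot: "(v \<longlongrightarrow> 0) at_bot"
    and le_top: "\<forall>\<^sub>F z in at_top. g z \<le> v'' z" and le_bot: "\<forall>\<^sub>F z in at_bot. g z \<le> v'' z"
  shows "g integrable_on UNIV"
proof -
  have g_int: "g integrable_on {x..y}" for x y
    by (rule integrable_continuous_interval) (rule continuous_on_subset[OF g_cont], simp)
  obtain a where "a \<ge> 0" and a_top: "\<And>z. a \<le> z \<Longrightarrow> g z \<le> v'' z"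
    and a_bot: "\<And>z. z \<le> -a \<Longrightarrow> g z \<le> v'' z"
  proof -
    obtain a1 a2 where "\<And>z. a1 \<le> z \<Longrightarrow> g z \<le> v'' z" "\<And>z. z \<le> a2 \<Longrightarrow> g z \<le> v'' z"
      using le_top le_bot unfolding eventually_at_top_linorder eventually_at_bot_linorder by blast
    thus ?thesis by (intro that[of "max 0 (max a1 (- a2))"]) auto
  qed
  have right: "integral {a..k} g \<le> - v' a" if "a \<le> k" for k
    by (rule integral_tail_le_minus_deriv[OF v' v'' g_nonneg a_top g_int lim_top that])
  have left: "integral {-k..-a} g \<le> v' (-a)" if "a \<le> k" for k
  proof -
    have "integral {a..k} (\<lambda>z. g (- z)) \<le> - (- v' (- a))"
    proof (rule integral_tail_le_minus_deriv[where v="\<lambda>z. v (- z)" and v''="\<lambda>z. v'' (- z)"])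
      show "((\<lambda>z. v (- z)) has_real_derivative - v' (- z)) (at z)" for z
        using DERIV_mirror[THEN iffD1, OF v'[of "- z"]] by simp
      show "((\<lambda>z. - v' (- z)) has_real_derivative v'' (- z)) (at z)" for z
        using DERIV_minus[OF DERIV_mirror[THEN iffD1, OF v''[of "- z"]]] by simp
      show "((\<lambda>z. v (- z)) \<longlongrightarrow> 0) at_top"
        by (rule filterlim_compose[OF lim_bot filterlim_uminus_at_bot_at_top])
      show "(\<lambda>z. g (- z)) integrable_on {a..k}"
        using Henstock_Kurzweil_Integration.integrable_reflect_real[where f=g and a="-k" and b="-a"] g_int by simp
    qed (use g_nonneg a_bot that in auto)
    thus ?thesis using Henstock_Kurzweil_Integration.integral_reflect_real[where f=g and a="-k" and b="-a"] by simp
  qed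
  define B where "B = integral {-a..a} g + v' (-a) - v' a"
  have "integral {-k..k} g \<le> B" for k
  proof (cases "k \<le> a")
    case True
    have "integral {-k..k} g \<le> integral {-a..a} g"
      by (rule integral_subset_le) (use True g_int g_nonneg in auto)
    moreover have "0 \<le> v' (-a)" "v' a \<le> 0" using left[of a] right[of a] by simp_all
    ultimately show ?thesis unfolding B_def by linarith
  next
    case False
    have "integral {-k..k} g = integral {-k..-a} g + integral {-a..a} g + integral {a..k} g"
      using Henstock_Kurzweil_Integration.integral_combine[of "-k" "-a" k g]
        Henstock_Kurzweil_Integration.integral_combine[of "-a" a k g] False \<open>a \<ge> 0\<close> g_int
      by simp
    thus ?thesis using left[of k] right[of k] False unfolding B_def by linarith
  qed
  thus ?thesis by (rule nonneg_integrable_on_UNIV_if_bounded[OF g_int g_nonneg])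
qed

lemma integral_pos_if_continuous_pos:
  fixes g :: "real \<Rightarrow> real"
  assumes g_cont: "continuous_on UNIV g" and g_pos: "\<And>z. 0 < g z" and g_int: "g integrable_on UNIV"
  shows "0 < integral UNIV g"
proof -
  have cont01: "continuous_on {0..1} g" by (rule continuous_on_subset[OF g_cont]) simp
  obtain x where min: "\<And>y. y \<in> {0..1::real} \<Longrightarrow> g x \<le> g y"
    using continuous_attains_inf[OF compact_Icc _ cont01] by fastforce
  have "integral {0..1::real} (\<lambda>_. g x) \<le> integral {0..1} g"
    by (rule integral_le) (use min integrable_continuous_interval[OF cont01] in auto)
  hence "g x \<le> integral {0..1} g" by simp
  also have "\<dots> \<le> integral UNIV g"
    by (rule integral_subset_le)
       (use g_int integrable_continuous_interval[OF cont01] g_pos less_imp_le in auto)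
  finally show ?thesis using g_pos[of x] by simp
qed

lemma powr_neg_diff_ge:
  fixes x y p :: real
  assumes "0 < x" "x < y" "0 < p"
  shows "p * (y - x) \<le> y powr (p + 1) * (x powr (- p) - y powr (- p))"
proof -
  have deriv: "((\<lambda>t. t powr (- p)) has_real_derivative - p * t powr (- p - 1)) (at t)"
    if "x \<le> t" "t \<le> y" for t
    using has_real_derivative_powr[of t "- p"] that \<open>0 < x\<close> by simp
  obtain z where z: "x < z" "z < y" "y powr (- p) - x powr (- p) = (y - x) * (- p * z powr (- p - 1))"
    using MVT2[OF \<open>x < y\<close> deriv] by blast
  have "y powr (- p - 1) \<le> z powr (- p - 1)"
    using z assms by (intro powr_mono2') auto
  hence "p * (y - x) * y powr (- p - 1) \<le> p * (y - x) * z powr (- p - 1)"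
    using assms by (intro mult_left_mono) auto
  also have "\<dots> = x powr (- p) - y powr (- p)"
    using z(3) by (simp add: algebra_simps)
  finally have "p * (y - x) * y powr (- p - 1) \<le> x powr (- p) - y powr (- p)" .
  hence "y powr (p + 1) * (p * (y - x) * y powr (- p - 1))
      \<le> y powr (p + 1) * (x powr (- p) - y powr (- p))"
    by (rule mult_left_mono) simp
  moreover have "y powr (p + 1) * y powr (- p - 1) = 1"
    using assms by (simp add: powr_add[symmetric])
  ultimately show ?thesis by (simp add: algebra_simps)
qed

lemma smooth_fun_has_real_derivative:
  assumes "smooth_fun f"
  shows "((deriv ^^ n) f has_real_derivative (deriv ^^ Suc n) f z) (at z)"
  using assms unfolding smooth_fun_def by (simp add: DERIV_deriv_iff_real_differentiable)

lemma smooth_fun_continuous_on: "smooth_fun f \<Longrightarrow> continuous_on S ((deriv ^^ n) f)"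
  by (meson DERIV_isCont continuous_at_imp_continuous_on smooth_fun_has_real_derivative)

lemma deriv_funpow_cmult:
  assumes "smooth_fun f"
  shows "(deriv ^^ n) (\<lambda>z. c * f z) = (\<lambda>z. c * (deriv ^^ n) f z)"
proof (induction n)
  case (Suc n)
  have "deriv (\<lambda>z. c * (deriv ^^ n) f z) = (\<lambda>z. c * (deriv ^^ Suc n) f z)"
    by (intro ext DERIV_imp_deriv DERIV_cmult smooth_fun_has_real_derivative[OF assms])
  thus ?case using Suc by simp
qed simp

lemma smooth_fun_cmult: "smooth_fun f \<Longrightarrow> smooth_fun (\<lambda>z. c * f z)"
  unfolding smooth_fun_def by (simp add: deriv_funpow_cmult[unfolded smooth_fun_def])

lemma soliton_tw_rescale:
  assumes sol: "soliton_tw \<kappa> \<gamma> \<nu> 1 \<eta>inf w \<eta>" and "0 < \<eta>inf"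
    and "0 < A" "0 < B" and sB: "s * B = A" and Bpowr: "B powr (-(\<nu> + 2)) = s * A"
  shows "soliton_tw \<kappa> \<gamma> \<nu> s (B * \<eta>inf) (\<lambda>z. A * w z) (\<lambda>z. B * \<eta> z)"
proof -
  from sol have smooth: "smooth_fun w" "smooth_fun \<eta>"
    and nonconst: "\<not> ((\<exists>c. \<forall>z. w z = c) \<and> (\<exists>c. \<forall>z. \<eta> z = c))"
    and pos: "\<forall>z. \<eta> z > 0"
    and E1: "\<forall>z. w z + \<eta>inf powr (-(\<nu>+2)) - \<eta> z powr (-(\<nu>+2)) = 0"
    and E2: "\<forall>z. \<gamma> * w z - \<kappa> * deriv (deriv w) z + (\<eta> z - \<eta>inf) = 0"
    and lims: "(w \<longlongrightarrow> 0) at_top" "(w \<longlongrightarrow> 0) at_bot"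
      "(\<eta> \<longlongrightarrow> \<eta>inf) at_top" "(\<eta> \<longlongrightarrow> \<eta>inf) at_bot"
    and above: "\<forall>z. \<eta> z > \<eta>inf"
    unfolding soliton_tw_def by simp_all
  have scale_powr: "(B * x) powr (-(\<nu> + 2)) = s * A * x powr (-(\<nu> + 2))" if "0 < x" for x
    using that \<open>0 < B\<close> Bpowr by (simp add: powr_mult)
  have dd: "deriv (deriv (\<lambda>z. A * w z)) = (\<lambda>z. A * deriv (deriv w) z)"
    using deriv_funpow_cmult[OF smooth(1), where c=A and n=2] by (simp add: numeral_2_eq_2)
  have "\<not> ((\<exists>c. \<forall>z. A * w z = c) \<and> (\<exists>c. \<forall>z. B * \<eta> z = c))"
  proof
    assume "(\<exists>c. \<forall>z. A * w z = c) \<and> (\<exists>c. \<forall>z. B * \<eta> z = c)"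
    then obtain c1 c2 where "\<forall>z. A * w z = c1" "\<forall>z. B * \<eta> z = c2" by blast
    hence "\<forall>z. w z = c1 / A" "\<forall>z. \<eta> z = c2 / B"
      using \<open>0 < A\<close> \<open>0 < B\<close> by (auto simp: field_simps)
    thus False using nonconst by blast
  qed
  moreover have "s * (A * w z) + (B * \<eta>inf) powr (-(\<nu>+2)) - (B * \<eta> z) powr (-(\<nu>+2))
      = s * A * (w z + \<eta>inf powr (-(\<nu>+2)) - \<eta> z powr (-(\<nu>+2)))" for z
    using scale_powr[OF \<open>0 < \<eta>inf\<close>] scale_powr[OF pos[rule_format, of z]]
    by (simp add: algebra_simps)
  moreover have "\<gamma> * (A * w z) - \<kappa> * deriv (deriv (\<lambda>z. A * w z)) z + s * (B * \<eta> z - B * \<eta>inf)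
      = A * (\<gamma> * w z - \<kappa> * deriv (deriv w) z + (\<eta> z - \<eta>inf))" for z
  proof -
    have "s * (B * \<eta> z - B * \<eta>inf) = A * (\<eta> z - \<eta>inf)"
      unfolding right_diff_distrib[symmetric] mult.assoc[symmetric] sB ..
    thus ?thesis unfolding dd by (simp add: algebra_simps)
  qed
  ultimately show ?thesis
    unfolding soliton_tw_def
    using smooth_fun_cmult smooth pos above E1 E2 \<open>0 < A\<close> \<open>0 < B\<close> lims
      tendsto_mult_left[of w 0 _ A] tendsto_mult_left[of \<eta> \<eta>inf _ B]
    by auto
qed

lemma soliton_tw_scaling:
  assumes "soliton_tw \<kappa> \<gamma> \<nu> 1 \<eta>inf w \<eta>" and "0 < \<eta>inf" and "0 < s" and "\<nu> + 3 \<noteq> 0"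
  shows "soliton_tw \<kappa> \<gamma> \<nu> s (s powr (-2 / (\<nu> + 3)) * \<eta>inf)
           (\<lambda>z. s powr ((\<nu> + 1) / (\<nu> + 3)) * w z) (\<lambda>z. s powr (-2 / (\<nu> + 3)) * \<eta> z)"
proof (rule soliton_tw_rescale[OF assms(1,2)])
  have s_mult: "s * s powr a = s powr (1 + a)" for a
    using \<open>0 < s\<close> by (simp add: powr_add)
  have "1 + -2 / (\<nu> + 3) = (\<nu> + 1) / (\<nu> + 3)"
    using \<open>\<nu> + 3 \<noteq> 0\<close> by (simp add: field_simps)
  thus "s * s powr (-2 / (\<nu> + 3)) = s powr ((\<nu> + 1) / (\<nu> + 3))"
    by (simp add: s_mult)
  have "-2 / (\<nu> + 3) * -(\<nu> + 2) = 1 + (\<nu> + 1) / (\<nu> + 3)"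
    using \<open>\<nu> + 3 \<noteq> 0\<close> by (simp add: field_simps)
  thus "(s powr (-2 / (\<nu> + 3))) powr -(\<nu> + 2) = s * s powr ((\<nu> + 1) / (\<nu> + 3))"
    by (simp add: powr_powr s_mult)
qed (use \<open>0 < s\<close> in simp_all)

lemma soliton_tw_unit_speed_w_neg:
  assumes sol: "soliton_tw \<kappa> \<gamma> \<nu> 1 \<eta>inf w \<eta>" and "0 < \<eta>inf" and "-2 < \<nu>"
  shows "w z < 0"
proof -
  have "w z = \<eta> z powr (-(\<nu> + 2)) - \<eta>inf powr (-(\<nu> + 2))" "\<eta>inf < \<eta> z"
    using sol unfolding soliton_tw_def by (auto simp: algebra_simps)
  moreover have "\<eta> z powr (-(\<nu> + 2)) < \<eta>inf powr (-(\<nu> + 2))" if "\<eta>inf < \<eta> z"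
    by (rule powr_less_mono2_neg) (use \<open>-2 < \<nu>\<close> \<open>0 < \<eta>inf\<close> that in auto)
  ultimately show ?thesis by simp
qed

lemma soliton_tw_unit_speed_deriv2_bound:
  assumes sol: "soliton_tw \<kappa> \<gamma> \<nu> 1 \<eta>inf w \<eta>" and "0 < \<eta>inf" and "-2 < \<nu>"
    and \<gamma>: "\<gamma> = \<beta> / (\<nu> + 2)"
  shows "(\<beta> - \<eta> z powr (\<nu> + 3)) * (- w z) \<le> (\<nu> + 2) * \<kappa> * (- deriv (deriv w) z)"
proof -
  have w: "- w z = \<eta>inf powr (-(\<nu> + 2)) - \<eta> z powr (-(\<nu> + 2))"
    and E2: "\<kappa> * deriv (deriv w) z = \<gamma> * w z + (\<eta> z - \<eta>inf)"
    and "\<eta>inf < \<eta> z"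
    using sol unfolding soliton_tw_def by (auto simp: algebra_simps)
  have "(\<nu> + 2) * (\<eta> z - \<eta>inf) \<le> \<eta> z powr (\<nu> + 3) * (- w z)"
    using powr_neg_diff_ge[of \<eta>inf "\<eta> z" "\<nu> + 2"] \<open>0 < \<eta>inf\<close> \<open>\<eta>inf < \<eta> z\<close> \<open>-2 < \<nu>\<close>
    unfolding w by (simp add: add.assoc)
  moreover have "(\<nu> + 2) * \<kappa> * (- deriv (deriv w) z) = \<beta> * (- w z) - (\<nu> + 2) * (\<eta> z - \<eta>inf)"
  proof -
    have \<beta>: "\<beta> = (\<nu> + 2) * \<gamma>" using \<gamma> \<open>-2 < \<nu>\<close> by simp
    have "(\<nu> + 2) * \<kappa> * (- deriv (deriv w) z) = - ((\<nu> + 2) * (\<kappa> * deriv (deriv w) z))"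
      by simp
    also have "\<dots> = \<beta> * (- w z) - (\<nu> + 2) * (\<eta> z - \<eta>inf)"
      unfolding E2 \<beta> by (simp add: algebra_simps)
    finally show ?thesis .
  qed
  ultimately show ?thesis unfolding left_diff_distrib by linarith
qed

lemma soliton_tw_unit_speed_momentum_integrable:
  assumes sol: "soliton_tw \<kappa> \<gamma> \<nu> 1 \<eta>inf w \<eta>" and "0 < \<eta>inf" and "-2 < \<nu>"
    and "0 < \<kappa>" and \<gamma>: "\<gamma> = \<beta> / (\<nu> + 2)" and below: "\<eta>inf powr (\<nu> + 3) < \<beta>"
  shows "(\<lambda>z. w z * (\<eta> z - \<eta>inf)) integrable_on UNIV"
proof -
  from sol have smooth: "smooth_fun w" "smooth_fun \<eta>" and above: "\<And>z. \<eta>inf < \<eta> z"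
    and lims: "(w \<longlongrightarrow> 0) at_top" "(w \<longlongrightarrow> 0) at_bot"
      "(\<eta> \<longlongrightarrow> \<eta>inf) at_top" "(\<eta> \<longlongrightarrow> \<eta>inf) at_bot"
    unfolding soliton_tw_def by simp_all
  have w_neg: "\<And>z. w z < 0" by (rule soliton_tw_unit_speed_w_neg[OF sol \<open>0 < \<eta>inf\<close> \<open>-2 < \<nu>\<close>])
  define \<beta>' where "\<beta>' = (\<eta>inf powr (\<nu> + 3) + \<beta>) / 2"
  define D where "D = (\<nu> + 2) * \<kappa> / (\<beta> - \<beta>')"
  define g where "g = (\<lambda>z. - (w z * (\<eta> z - \<eta>inf)))"
  \<comment> \<open>Near \<open>\<plusminus>\<infinity>\<close>, \<open>\<eta> powr (\<nu> + 3) < \<beta>'\<close> makes \<open>- D * w''\<close> dominate \<open>- w\<close>, which dominates \<open>g\<close>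
      once \<open>\<eta> - \<eta>inf < 1\<close>.\<close>
  have tail: "\<forall>\<^sub>F z in F. g z \<le> - D * deriv (deriv w) z" if lim: "(\<eta> \<longlongrightarrow> \<eta>inf) F" for F
  proof -
    have "((\<lambda>z. \<eta> z powr (\<nu> + 3)) \<longlongrightarrow> \<eta>inf powr (\<nu> + 3)) F"
      by (rule tendsto_powr[OF lim tendsto_const]) (use \<open>0 < \<eta>inf\<close> in simp)
    hence "\<forall>\<^sub>F z in F. \<eta> z powr (\<nu> + 3) < \<beta>' \<and> \<eta> z < \<eta>inf + 1"
      using below lim unfolding \<beta>'_def by (intro eventually_conj order_tendstoD) auto
    moreover have "g z \<le> - D * deriv (deriv w) z"
      if "\<eta> z powr (\<nu> + 3) < \<beta>'" "\<eta> z < \<eta>inf + 1" for z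
    proof -
      have "g z \<le> - w z"
        unfolding g_def using that w_neg[of z] above[of z] by (simp add: mult_left_le)
      also have "\<dots> \<le> - D * deriv (deriv w) z"
      proof -
        have "(\<beta> - \<beta>') * (- w z) \<le> (\<beta> - \<eta> z powr (\<nu> + 3)) * (- w z)"
          using that w_neg[of z] by (intro mult_right_mono) auto
        thus ?thesis
          using soliton_tw_unit_speed_deriv2_bound[OF sol \<open>0 < \<eta>inf\<close> \<open>-2 < \<nu>\<close> \<gamma>, of z] below
          unfolding D_def \<beta>'_def by (simp add: field_simps)
      qed
      finally show ?thesis .
    qed
    ultimately show ?thesis by (auto elim: eventually_mono)
  qed
  have "g integrable_on UNIV"
  proof (rule integrable_on_UNIV_if_tails_below_convex[where v="\<lambda>z. - D * w z"])
    show "continuous_on UNIV g"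
      unfolding g_def using smooth_fun_continuous_on[OF smooth(1), of _ 0]
        smooth_fun_continuous_on[OF smooth(2), of _ 0]
      by (auto intro!: continuous_intros)
    show "0 \<le> g z" for z
      unfolding g_def using w_neg[of z] above[of z] by (simp add: mult_nonpos_nonneg)
    show "((\<lambda>z. - D * w z) has_real_derivative - D * deriv w z) (at z)" for z
      using DERIV_cmult[OF smooth_fun_has_real_derivative[OF smooth(1), of 0], where c="- D"] by simp
    show "((\<lambda>z. - D * deriv w z) has_real_derivative - D * deriv (deriv w) z) (at z)" for z
      using DERIV_cmult[OF smooth_fun_has_real_derivative[OF smooth(1), of 1], where c="- D"] by simp
    show "((\<lambda>z. - D * w z) \<longlongrightarrow> 0) at_top" "((\<lambda>z. - D * w z) \<longlongrightarrow> 0) at_bot"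
      using tendsto_mult_left[OF lims(1), of "- D"] tendsto_mult_left[OF lims(2), of "- D"] by simp_all
  qed (use tail lims in simp_all)
  thus ?thesis unfolding g_def by (simp add: integrable_neg_iff)
qed

lemma soliton_tw_unit_speed_momentum_neg:
  assumes sol: "soliton_tw \<kappa> \<gamma> \<nu> 1 \<eta>inf w \<eta>" and "0 < \<eta>inf" and "-2 < \<nu>"
    and "0 < \<kappa>" and "\<gamma> = \<beta> / (\<nu> + 2)" and "\<eta>inf powr (\<nu> + 3) < \<beta>"
  shows "integral UNIV (\<lambda>z. w z * (\<eta> z - \<eta>inf)) < 0"
proof -
  from sol have smooth: "smooth_fun w" "smooth_fun \<eta>" and above: "\<And>z. \<eta>inf < \<eta> z"
    unfolding soliton_tw_def by simp_all
  have "0 < integral UNIV (\<lambda>z. - (w z * (\<eta> z - \<eta>inf)))"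
  proof (rule integral_pos_if_continuous_pos)
    show "continuous_on UNIV (\<lambda>z. - (w z * (\<eta> z - \<eta>inf)))"
      using smooth_fun_continuous_on[OF smooth(1), of _ 0] smooth_fun_continuous_on[OF smooth(2), of _ 0]
      by (auto intro!: continuous_intros)
    show "0 < - (w z * (\<eta> z - \<eta>inf))" for z
      using soliton_tw_unit_speed_w_neg[OF sol \<open>0 < \<eta>inf\<close> \<open>-2 < \<nu>\<close>, of z] above[of z]
      by (simp add: mult_neg_pos)
    show "(\<lambda>z. - (w z * (\<eta> z - \<eta>inf))) integrable_on UNIV"
      using soliton_tw_unit_speed_momentum_integrable[OF assms] by (rule integrable_neg)
  qed
  thus ?thesis by simp
qed

theorem mainTheorem10:
  fixes \<beta> \<kappa> \<gamma> \<nu> \<eta>0inf :: real and w0 \<eta>0 :: "real \<Rightarrow> real"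
  assumes "\<beta> > 0" and "\<kappa> > 0" and "\<gamma> = \<beta> / (\<nu> + 2)"
    and "-1 < \<nu>" and "\<nu> < 1"
    and "\<eta>0inf > 0"
    and "\<beta> * (\<nu> + 1) / (2 * (\<nu> + 2)) < \<eta>0inf powr (\<nu> + 3)"
    and "\<eta>0inf powr (\<nu> + 3) < \<beta>"
    and "soliton_tw \<kappa> \<gamma> \<nu> 1 \<eta>0inf w0 \<eta>0"
  defines "\<eta>inf \<equiv> (\<lambda>s::real. s powr (-2 / (\<nu> + 3)) * \<eta>0inf)"
    and "ws \<equiv> (\<lambda>s z::real. s powr ((\<nu> + 1) / (\<nu> + 3)) * w0 z)"
    and "\<eta>s \<equiv> (\<lambda>s z::real. s powr (-2 / (\<nu> + 3)) * \<eta>0 z)"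
    and "I \<equiv> (\<lambda>s::real. integral UNIV (\<lambda>z. s powr ((\<nu> + 1) / (\<nu> + 3)) * w0 z *
              (s powr (-2 / (\<nu> + 3)) * \<eta>0 z - s powr (-2 / (\<nu> + 3)) * \<eta>0inf)))"
  shows "\<forall>s>0. soliton_tw \<kappa> \<gamma> \<nu> s (\<eta>inf s) (ws s) (\<eta>s s) \<and>
           (I has_real_derivative
              s powr (-4 / (\<nu> + 3)) * ((\<nu> - 1) / (\<nu> + 3)) *
                integral UNIV (\<lambda>z. w0 z * (\<eta>0 z - \<eta>0inf))) (at s) \<and>
           s powr (-4 / (\<nu> + 3)) * ((\<nu> - 1) / (\<nu> + 3)) *
                integral UNIV (\<lambda>z. w0 z * (\<eta>0 z - \<eta>0inf)) > 0"
proof -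
  \<comment> \<open>The lower bound on \<open>\<eta>0inf powr (\<nu> + 3)\<close> is only needed for the existence of \<open>(w0, \<eta>0)\<close>.\<close>
  have "-2 < \<nu>" "0 < \<nu> + 3" using \<open>-1 < \<nu>\<close> by simp_all
  define J where "J = integral UNIV (\<lambda>z. w0 z * (\<eta>0 z - \<eta>0inf))"
  have "J < 0"
    unfolding J_def using assms(2,3,6,8,9) \<open>-2 < \<nu>\<close> by (intro soliton_tw_unit_speed_momentum_neg)
  have I_eq: "I s = s powr ((\<nu> - 1) / (\<nu> + 3)) * J" for s
  proof -
    have "(\<nu> + 1) / (\<nu> + 3) + -2 / (\<nu> + 3) = (\<nu> - 1) / (\<nu> + 3)"
      by (simp add: diff_divide_distrib[symmetric])
    hence "I s = integral UNIV (\<lambda>z. s powr ((\<nu> - 1) / (\<nu> + 3)) * (w0 z * (\<eta>0 z - \<eta>0inf)))"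
      unfolding I_def by (simp add: powr_add[symmetric] algebra_simps)
    thus ?thesis unfolding J_def by simp
  qed
  have exponent: "(\<nu> - 1) / (\<nu> + 3) - 1 = -4 / (\<nu> + 3)"
    using \<open>0 < \<nu> + 3\<close> by (simp add: field_simps)
  show ?thesis
    unfolding J_def[symmetric]
  proof (intro allI impI conjI)
    fix s :: real assume "0 < s"
    show "soliton_tw \<kappa> \<gamma> \<nu> s (\<eta>inf s) (ws s) (\<eta>s s)"
      unfolding \<eta>inf_def ws_def \<eta>s_def using assms(9,6) \<open>0 < s\<close> \<open>0 < \<nu> + 3\<close>
      by (intro soliton_tw_scaling) simp_all
    show "(I has_real_derivative s powr (-4 / (\<nu> + 3)) * ((\<nu> - 1) / (\<nu> + 3)) * J) (at s)"
      unfolding I_eq[abs_def] exponent[symmetric] using \<open>0 < s\<close>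
      by (auto intro!: derivative_eq_intros)
    have "0 < (\<nu> - 1) / (\<nu> + 3) * J"
      using \<open>J < 0\<close> \<open>\<nu> < 1\<close> \<open>0 < \<nu> + 3\<close> by (intro mult_neg_neg divide_neg_pos) auto
    thus "0 < s powr (-4 / (\<nu> + 3)) * ((\<nu> - 1) / (\<nu> + 3)) * J"
      unfolding mult.assoc by (rule mult_pos_pos[rotated]) (use \<open>0 < s\<close> in simp)
  qed
qed

end
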